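(* For every partition $\lambda$ of $n$, the $\operatorname{GZ}_n$-module $1_\lambda=\operatorname{GZ}_n/I_\lambda$ is free of rank one as an $R$-module, generated by the image of $1$, and $L_i$ acts on it by multiplication by $r_\lambda(i)$.
   Context: $R$ is the localization of $\mathbb Z$ at a prime $(p)$. Jucys–Murphy elements $L_1=0$, $L_k=\sum_{j<k}(j,k)$; $\operatorname{GZ}_n$ is the $R$-subalgebra of $RS_n$ generated by $L_1,\dots,L_n$. Content $r_t(k)=j-i$ if $k$ is in node $[i,j]$ of the tableau $t$; $t^\lambda$ is the $\lambda$-tableau with $1,\dots,n$ entered in order along rows, $r_\lambda(i):=r_{t^\lambda}(i)$. $I_\lambda$ is the ideal of $\operatorname{GZ}_n$ generated by $L_i-r_\lambda(i)$, $i=1,\dots,n$. *)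

theory Defs
  imports "HOL-Combinatorics.Combinatorics" "HOL-Computational_Algebra.Primes" "HOL-Library.Function_Algebras"
begin

text \<open>R = Z localized at the prime ideal (p), as a subring of the rationals.\<close>
definition Zloc :: "int \<Rightarrow> rat set" where
  "Zloc p = {q. \<not> p dvd snd (quotient_of q)}"

definition Sym :: "nat \<Rightarrow> (nat \<Rightarrow> nat) set" where
  "Sym n = {\<sigma>. \<sigma> permutes {1..n}}"

text \<open>Elements of the group algebra (over Q, containing R S_n) are functions
  (nat \<Rightarrow> nat) \<Rightarrow> rat vanishing outside Sym n; basis element of sigma is
  the indicator of sigma; the product extends (sigma, tau) to sigma o tau.\<close>
definition galg :: "nat \<Rightarrow> ((nat \<Rightarrow> nat) \<Rightarrow> rat) set" where
  "galg n = {f. \<forall>\<sigma>. \<sigma> \<notin> Sym n \<longrightarrow> f \<sigma> = 0}"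

definition gbasis :: "nat \<Rightarrow> (nat \<Rightarrow> nat) \<Rightarrow> (nat \<Rightarrow> nat) \<Rightarrow> rat" where
  "gbasis n \<sigma> = (\<lambda>\<tau>. if \<tau> = \<sigma> \<and> \<sigma> \<in> Sym n then 1 else 0)"

definition gone :: "nat \<Rightarrow> (nat \<Rightarrow> nat) \<Rightarrow> rat" where
  "gone n = gbasis n id"

definition gmult :: "nat \<Rightarrow> ((nat \<Rightarrow> nat) \<Rightarrow> rat) \<Rightarrow> ((nat \<Rightarrow> nat) \<Rightarrow> rat) \<Rightarrow> (nat \<Rightarrow> nat) \<Rightarrow> rat" where
  "gmult n f g = (\<lambda>\<sigma>. if \<sigma> \<in> Sym n then (\<Sum>\<tau>\<in>Sym n. f \<tau> * g (inv \<tau> \<circ> \<sigma>)) else 0)"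

definition gsmult :: "rat \<Rightarrow> ((nat \<Rightarrow> nat) \<Rightarrow> rat) \<Rightarrow> (nat \<Rightarrow> nat) \<Rightarrow> rat" where
  "gsmult r f = (\<lambda>\<sigma>. r * f \<sigma>)"

definition JM :: "nat \<Rightarrow> nat \<Rightarrow> (nat \<Rightarrow> nat) \<Rightarrow> rat" where
  "JM n k = (\<lambda>\<sigma>. \<Sum>j\<in>{1..<k}. gbasis n (transpose j k) \<sigma>)"

inductive_set GZ :: "int \<Rightarrow> nat \<Rightarrow> ((nat \<Rightarrow> nat) \<Rightarrow> rat) set" for p n where
  scal: "r \<in> Zloc p \<Longrightarrow> gsmult r (gone n) \<in> GZ p n"
| gen: "1 \<le> k \<Longrightarrow> k \<le> n \<Longrightarrow> JM n k \<in> GZ p n"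
| add: "x \<in> GZ p n \<Longrightarrow> y \<in> GZ p n \<Longrightarrow> x + y \<in> GZ p n"
| mult: "x \<in> GZ p n \<Longrightarrow> y \<in> GZ p n \<Longrightarrow> gmult n x y \<in> GZ p n"
| smult: "r \<in> Zloc p \<Longrightarrow> x \<in> GZ p n \<Longrightarrow> gsmult r x \<in> GZ p n"

definition is_partition :: "nat \<Rightarrow> nat list \<Rightarrow> bool" where
  "is_partition n lam \<longleftrightarrow> sorted_wrt (\<ge>) lam \<and> 0 \<notin> set lam \<and> sum_list lam = n"

text \<open>Content of k in the row-reading tableau t^lambda: k lies in row i+1
  (i the least index with k \<le> lam_1+...+lam_(i+1)) and column
  k - (lam_1+...+lam_i); content = column - row.\<close>
definition row0 :: "nat list \<Rightarrow> nat \<Rightarrow> nat" where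
  "row0 lam k = (LEAST i. k \<le> sum_list (take (Suc i) lam))"

definition content :: "nat list \<Rightarrow> nat \<Rightarrow> int" where
  "content lam k = int (k - sum_list (take (row0 lam k) lam)) - int (Suc (row0 lam k))"

inductive_set Ilam :: "int \<Rightarrow> nat \<Rightarrow> nat list \<Rightarrow> ((nat \<Rightarrow> nat) \<Rightarrow> rat) set" for p n lam where
  zero: "0 \<in> Ilam p n lam"
| gen: "1 \<le> i \<Longrightarrow> i \<le> n \<Longrightarrow> JM n i - gsmult (of_int (content lam i)) (gone n) \<in> Ilam p n lam"
| add: "x \<in> Ilam p n lam \<Longrightarrow> y \<in> Ilam p n lam \<Longrightarrow> x + y \<in> Ilam p n lam"
| lmult: "a \<in> GZ p n \<Longrightarrow> x \<in> Ilam p n lam \<Longrightarrow> gmult n a x \<in> Ilam p n lam"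
| rmult: "a \<in> GZ p n \<Longrightarrow> x \<in> Ilam p n lam \<Longrightarrow> gmult n x a \<in> Ilam p n lam"

end

theory Submission
  imports Defs "HOL-Computational_Algebra.Polynomial"
begin

(* Existence of r and the action of L_i are formal: an induction over the generation of GZ_n
   shows that 1 spans the quotient (using that Z_(p) is a ring), and L_i - r_lam(i) lies in
   I_lam by definition. The substance is uniqueness, i.e. that 1 is not torsion in the
   quotient. For this we let the group algebra act (twisted by the sign character) on
   functions F(x_1, ..., x_n) of rational variables, and exhibit a common eigenvector of the
   Jucys-Murphy elements with eigenvalues r_lam(1), ..., r_lam(n): the product over all rows
   of t^lam of the Vandermonde determinant of the variables in that row. Every element of
   I_lam then annihilates this vector while a nonzero scalar does not. The eigenvalue
   computation splits L_k = sum_{j<k} (j k) into transpositions inside the row of k, each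
   contributing -1 by antisymmetry, and the transpositions with a row above, each row
   contributing +1 by a Garnir-type identity; the latter is proved by comparing two
   polynomials of degree < lam_r' in one variable at lam_r' distinct points. *)

(* Polynomial.content would shadow the content function of the tableau. *)
hide_const (open) Polynomial.content

section \<open>The local ring Z_(p)\<close>

text \<open>A fraction whose denominator is prime to p lies in Z_(p), because the reduced
  denominator divides the given one; conversely every element of Z_(p) is such a fraction.\<close>
lemma Zloc_Fract:
  assumes b: "b > 0" "\<not> p dvd b"
  shows "Fract a b \<in> Zloc p"
proof -
  have "snd (quotient_of (Fract a b)) = b div gcd a b"
    using b by (simp add: quotient_of_Fract Rat.normalize_def Let_def)
  also have "\<dots> dvd b" by (metis dvd_def dvd_div_mult_self gcd_dvd2 mult.commute)
  finally have "snd (quotient_of (Fract a b)) dvd b" .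
  then show ?thesis using b(2) dvd_trans unfolding Zloc_def by blast
qed

lemma Zloc_FractE:
  assumes "x \<in> Zloc p"
  obtains a b where "b > 0" "\<not> p dvd b" "x = Fract a b"
proof
  show "snd (quotient_of x) > 0" by (rule quotient_of_denom_pos')
  show "\<not> p dvd snd (quotient_of x)" using assms unfolding Zloc_def by simp
qed (rule Fract_quotient_of[symmetric])

lemma Zloc_add:
  assumes p: "prime p" and x: "x \<in> Zloc p" and y: "y \<in> Zloc p"
  shows "x + y \<in> Zloc p"
proof -
  obtain a b where ab: "b > 0" "\<not> p dvd b" "x = Fract a b" using Zloc_FractE[OF x] .
  obtain c d where cd: "d > 0" "\<not> p dvd d" "y = Fract c d" using Zloc_FractE[OF y] .
  have "x + y = Fract (a * d + c * b) (b * d)" using ab cd by simp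
  moreover have "\<not> p dvd b * d" using p ab cd by (simp add: prime_dvd_mult_iff)
  ultimately show ?thesis using Zloc_Fract ab cd by simp
qed

lemma Zloc_mult:
  assumes p: "prime p" and x: "x \<in> Zloc p" and y: "y \<in> Zloc p"
  shows "x * y \<in> Zloc p"
proof -
  obtain a b where ab: "b > 0" "\<not> p dvd b" "x = Fract a b" using Zloc_FractE[OF x] .
  obtain c d where cd: "d > 0" "\<not> p dvd d" "y = Fract c d" using Zloc_FractE[OF y] .
  have "x * y = Fract (a * c) (b * d)" using ab cd by simp
  moreover have "\<not> p dvd b * d" using p ab cd by (simp add: prime_dvd_mult_iff)
  ultimately show ?thesis using Zloc_Fract ab cd by simp
qed

lemma Zloc_of_int:
  assumes "prime p" shows "of_int i \<in> Zloc p"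
  using prime_gt_1_int[OF assms] by (simp add: Zloc_def quotient_of_int)

section \<open>The group algebra\<close>

lemma finite_Sym: "finite (Sym n)"
  unfolding Sym_def by (rule finite_permutations) simp

lemma Sym_permutation: "\<sigma> \<in> Sym n \<Longrightarrow> permutation \<sigma>"
  unfolding Sym_def using finite_atLeastAtMost permutation_permutes by blast

lemma Sym_comp: "\<sigma> \<in> Sym n \<Longrightarrow> \<tau> \<in> Sym n \<Longrightarrow> \<sigma> \<circ> \<tau> \<in> Sym n"
  unfolding Sym_def by (simp add: permutes_compose)

lemma Sym_inv: "\<sigma> \<in> Sym n \<Longrightarrow> inv \<sigma> \<in> Sym n"
  unfolding Sym_def by (simp add: permutes_inv)

lemma Sym_id: "id \<in> Sym n"
  unfolding Sym_def by simp

lemma gone_galg: "gone n \<in> galg n"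
  unfolding galg_def gone_def gbasis_def by auto

lemma gsmult_galg: "f \<in> galg n \<Longrightarrow> gsmult r f \<in> galg n"
  unfolding galg_def gsmult_def by auto

lemma add_galg: "f \<in> galg n \<Longrightarrow> g \<in> galg n \<Longrightarrow> f + g \<in> galg n"
  unfolding galg_def by auto

lemma diff_galg: "f \<in> galg n \<Longrightarrow> g \<in> galg n \<Longrightarrow> f - g \<in> galg n"
  unfolding galg_def by auto

lemma gmult_galg: "gmult n f g \<in> galg n"
  unfolding galg_def gmult_def by auto

lemma JM_galg: "JM n k \<in> galg n"
  unfolding galg_def JM_def gbasis_def by (auto intro!: sum.neutral)

lemma zero_galg: "0 \<in> galg n"
  unfolding galg_def by simp

lemma GZ_galg: "x \<in> GZ p n \<Longrightarrow> x \<in> galg n"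
  by (induction rule: GZ.induct) (blast intro: gsmult_galg gone_galg JM_galg add_galg gmult_galg)+

lemma Ilam_galg: "x \<in> Ilam p n lam \<Longrightarrow> x \<in> galg n"
  by (induction rule: Ilam.induct)
     (blast intro: zero_galg gsmult_galg gone_galg JM_galg add_galg gmult_galg diff_galg)+

lemma gmult_one: "y \<in> galg n \<Longrightarrow> gmult n (gone n) y = y"
proof
  fix \<sigma> assume y: "y \<in> galg n"
  show "gmult n (gone n) y \<sigma> = y \<sigma>"
  proof (cases "\<sigma> \<in> Sym n")
    case True
    have "gmult n (gone n) y \<sigma> = (\<Sum>\<tau>\<in>Sym n. (if \<tau> = id then y (inv \<tau> \<circ> \<sigma>) else 0))"
      using True Sym_id unfolding gmult_def gone_def gbasis_def by (auto intro!: sum.cong)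
    also have "\<dots> = y \<sigma>" using Sym_id finite_Sym by simp
    finally show ?thesis .
  next
    case False then show ?thesis using y unfolding gmult_def galg_def by auto
  qed
qed

lemma gmult_diff_left: "gmult n (f - g) y = gmult n f y - gmult n g y"
  unfolding gmult_def by (auto simp: algebra_simps sum_subtractf fun_eq_iff)

lemma gmult_smult_left: "gmult n (gsmult r f) y = gsmult r (gmult n f y)"
  unfolding gmult_def gsmult_def by (auto simp: algebra_simps sum_distrib_left fun_eq_iff)

text \<open>I_lam is a Z_(p)-submodule: scalars r act as left multiplication by r \<cdot> 1 \<in> GZ_n.\<close>
lemma Ilam_smult:
  assumes "r \<in> Zloc p" "z \<in> Ilam p n lam"
  shows "gsmult r z \<in> Ilam p n lam"
proof -
  have "gmult n (gsmult r (gone n)) z \<in> Ilam p n lam" using assms by (intro Ilam.lmult GZ.scal)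
  then show ?thesis using gmult_one[OF Ilam_galg[OF assms(2)]] by (simp add: gmult_smult_left)
qed

text \<open>Every element of GZ_n is congruent to a scalar modulo I_lam: each generator is
  (L_k \<equiv> r_lam(k) by definition), and the congruence classes of scalars are closed under
  the ring operations.\<close>
lemma GZ_congruent_scalar:
  assumes p: "prime p" and x: "x \<in> GZ p n"
  shows "\<exists>r. r \<in> Zloc p \<and> x - gsmult r (gone n) \<in> Ilam p n lam"
  using x
proof (induction rule: GZ.induct)
  case (scal r)
  then show ?case using Ilam.zero by (metis diff_self)
next
  case (gen k)
  then show ?case using Ilam.gen Zloc_of_int[OF p] by blast
next
  case (add x y)
  then obtain r s where r: "r \<in> Zloc p" "x - gsmult r (gone n) \<in> Ilam p n lam"
    and s: "s \<in> Zloc p" "y - gsmult s (gone n) \<in> Ilam p n lam" by blast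
  have "x + y - gsmult (r + s) (gone n) = (x - gsmult r (gone n)) + (y - gsmult s (gone n))"
    by (auto simp: gsmult_def fun_eq_iff algebra_simps)
  then show ?case using Ilam.add[OF r(2) s(2)] Zloc_add[OF p r(1) s(1)] by metis
next
  case (mult x y)
  then obtain r s where r: "r \<in> Zloc p" "x - gsmult r (gone n) \<in> Ilam p n lam"
    and s: "s \<in> Zloc p" "y - gsmult s (gone n) \<in> Ilam p n lam" by blast
  have "gmult n (x - gsmult r (gone n)) y + gsmult r (y - gsmult s (gone n))
      = gmult n x y - gsmult r (gmult n (gone n) y) + gsmult r (y - gsmult s (gone n))"
    by (simp add: gmult_diff_left gmult_smult_left)
  also have "\<dots> = gmult n x y - gsmult (r * s) (gone n)"
    unfolding gmult_one[OF GZ_galg[OF mult.hyps(2)]] by (auto simp: gsmult_def fun_eq_iff algebra_simps)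
  finally have "gmult n x y - gsmult (r * s) (gone n)
      = gmult n (x - gsmult r (gone n)) y + gsmult r (y - gsmult s (gone n))" ..
  moreover have "gmult n (x - gsmult r (gone n)) y \<in> Ilam p n lam"
    using Ilam.rmult[OF mult.hyps(2) r(2)] .
  moreover have "gsmult r (y - gsmult s (gone n)) \<in> Ilam p n lam"
    using Ilam_smult[OF r(1) s(2)] .
  ultimately show ?case using Ilam.add Zloc_mult[OF p r(1) s(1)] by metis
next
  case (smult r x)
  then obtain s where s: "s \<in> Zloc p" "x - gsmult s (gone n) \<in> Ilam p n lam" by blast
  have "gsmult r x - gsmult (r * s) (gone n) = gsmult r (x - gsmult s (gone n))"
    by (auto simp: gsmult_def fun_eq_iff algebra_simps)
  then show ?case using Ilam_smult[OF smult.hyps(1) s(2)] Zloc_mult[OF p smult.hyps(1) s(1)] by metis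
qed

lemma JM_acts_by_content:
  assumes i: "1 \<le> i" "i \<le> n" and x: "x \<in> GZ p n"
  shows "gmult n (JM n i) x - gsmult (of_int (content lam i)) x \<in> Ilam p n lam"
proof -
  have "gmult n (JM n i - gsmult (of_int (content lam i)) (gone n)) x \<in> Ilam p n lam"
    using i by (intro Ilam.rmult[OF x] Ilam.gen)
  then show ?thesis by (simp add: gmult_diff_left gmult_smult_left gmult_one[OF GZ_galg[OF x]])
qed

section \<open>The sign-twisted action on functions of n variables\<close>

text \<open>A scalar that is congruent to x
  modulo I_lam is detected by how x acts on a common eigenvector of the L_k.\<close>
definition sign_act :: "nat \<Rightarrow> ((nat \<Rightarrow> nat) \<Rightarrow> rat) \<Rightarrow> ((nat \<Rightarrow> rat) \<Rightarrow> rat) \<Rightarrow> (nat \<Rightarrow> rat) \<Rightarrow> rat" where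
  "sign_act n f w = (\<lambda>x. \<Sum>\<sigma>\<in>Sym n. f \<sigma> * of_int (sign \<sigma>) * w (x \<circ> \<sigma>))"

lemma sign_act_gmult: "sign_act n (gmult n f g) w = sign_act n f (sign_act n g w)"
proof
  fix x
  have "sign_act n (gmult n f g) w x
      = (\<Sum>\<rho>\<in>Sym n. (\<Sum>\<tau>\<in>Sym n. f \<tau> * g (inv \<tau> \<circ> \<rho>)) * of_int (sign \<rho>) * w (x \<circ> \<rho>))"
    unfolding sign_act_def gmult_def by (intro sum.cong) auto
  also have "\<dots> = (\<Sum>\<tau>\<in>Sym n. \<Sum>\<rho>\<in>Sym n. f \<tau> * (g (inv \<tau> \<circ> \<rho>) * of_int (sign \<rho>) * w (x \<circ> \<rho>)))"
    by (subst sum.swap) (simp add: sum_distrib_right mult.assoc)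
  also have "\<dots> = (\<Sum>\<tau>\<in>Sym n. \<Sum>\<tau>'\<in>Sym n. f \<tau> * (g \<tau>' * of_int (sign (\<tau> \<circ> \<tau>')) * w (x \<circ> (\<tau> \<circ> \<tau>'))))"
  proof (rule sum.cong[OF refl])
    fix \<tau> assume t: "\<tau> \<in> Sym n"
    have tp: "\<tau> permutes {1..n}" using t by (simp add: Sym_def)
    show "(\<Sum>\<rho>\<in>Sym n. f \<tau> * (g (inv \<tau> \<circ> \<rho>) * of_int (sign \<rho>) * w (x \<circ> \<rho>)))
        = (\<Sum>\<tau>'\<in>Sym n. f \<tau> * (g \<tau>' * of_int (sign (\<tau> \<circ> \<tau>')) * w (x \<circ> (\<tau> \<circ> \<tau>'))))"
      by (rule sum.reindex_bij_witness[where j="\<lambda>\<rho>. inv \<tau> \<circ> \<rho>" and i="\<lambda>\<tau>'. \<tau> \<circ> \<tau>'"])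
         (use Sym_comp Sym_inv t in \<open>auto simp: o_assoc permutes_inv_o[OF tp]\<close>)
  qed
  also have "\<dots> = sign_act n f (sign_act n g w) x"
    unfolding sign_act_def
    by (auto simp: sum_distrib_left sign_compose Sym_permutation o_assoc intro!: sum.cong)
  finally show "sign_act n (gmult n f g) w x = sign_act n f (sign_act n g w) x" .
qed

lemma sign_act_basis:
  "\<tau> \<in> Sym n \<Longrightarrow> sign_act n (gbasis n \<tau>) w x = of_int (sign \<tau>) * w (x \<circ> \<tau>)"
  unfolding sign_act_def gbasis_def
  by (simp add: if_distrib if_distribR sum.If_cases finite_Sym cong: if_cong)

lemma sign_act_one: "sign_act n (gone n) w = w"
  by (rule ext) (simp add: gone_def sign_act_basis Sym_id)

lemma sign_act_add: "sign_act n (f + g) w = (\<lambda>x. sign_act n f w x + sign_act n g w x)"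
  unfolding sign_act_def by (auto simp: algebra_simps sum.distrib)

lemma sign_act_diff: "sign_act n (f - g) w = (\<lambda>x. sign_act n f w x - sign_act n g w x)"
  unfolding sign_act_def by (auto simp: algebra_simps sum_subtractf)

lemma sign_act_smult: "sign_act n (gsmult r f) w = (\<lambda>x. r * sign_act n f w x)"
  unfolding sign_act_def gsmult_def by (auto simp: algebra_simps sum_distrib_left)

lemma sign_act_scale: "sign_act n f (\<lambda>x. r * w x) = (\<lambda>x. r * sign_act n f w x)"
  unfolding sign_act_def by (auto simp: algebra_simps sum_distrib_left)

lemma sign_act_of_zero: "sign_act n f (\<lambda>x. 0) = (\<lambda>x. 0)"
  unfolding sign_act_def by auto

lemma sign_act_JM:
  assumes "k \<le> n"
  shows "sign_act n (JM n k) w x = - (\<Sum>j\<in>{1..<k}. w (x \<circ> transpose j k))"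
proof -
  have "sign_act n (JM n k) w x = (\<Sum>j\<in>{1..<k}. sign_act n (gbasis n (transpose j k)) w x)"
    unfolding sign_act_def JM_def by (simp add: sum_distrib_right sum.swap[of _ "Sym n"])
  also have "\<dots> = (\<Sum>j\<in>{1..<k}. - w (x \<circ> transpose j k))"
  proof (intro sum.cong refl)
    fix j assume j: "j \<in> {1..<k}"
    then have "transpose j k \<in> Sym n"
      using assms unfolding Sym_def by (auto intro!: permutes_swap_id)
    then show "sign_act n (gbasis n (transpose j k)) w x = - w (x \<circ> transpose j k)"
      using j by (simp add: sign_act_basis sign_swap_id)
  qed
  finally show ?thesis by (simp add: sum_negf)
qed

lemma GZ_eigenvector:
  assumes eig: "\<And>k. 1 \<le> k \<Longrightarrow> k \<le> n \<Longrightarrow> \<exists>c. sign_act n (JM n k) w = (\<lambda>x. c * w x)"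
    and a: "a \<in> GZ p n"
  shows "\<exists>q. sign_act n a w = (\<lambda>x. q * w x)"
  using a
proof (induction rule: GZ.induct)
  case (scal r)
  then show ?case by (auto simp: sign_act_smult sign_act_one)
next
  case (gen k)
  then show ?case using eig by blast
next
  case (add x y)
  then obtain q1 q2 where "sign_act n x w = (\<lambda>x. q1 * w x)" "sign_act n y w = (\<lambda>x. q2 * w x)"
    by blast
  then show ?case unfolding sign_act_add by (auto simp: algebra_simps intro!: exI[of _ "q1 + q2"])
next
  case (mult x y)
  then obtain q1 q2 where "sign_act n x w = (\<lambda>x. q1 * w x)" "sign_act n y w = (\<lambda>x. q2 * w x)"
    by blast
  then show ?case by (auto simp: sign_act_gmult sign_act_scale intro!: exI[of _ "q2 * q1"])
next
  case (smult r x)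
  then obtain q1 where "sign_act n x w = (\<lambda>x. q1 * w x)" by blast
  then show ?case by (auto simp: sign_act_smult intro!: exI[of _ "r * q1"])
qed

lemma Ilam_annihilates:
  assumes eig: "\<And>k. 1 \<le> k \<Longrightarrow> k \<le> n \<Longrightarrow>
                   sign_act n (JM n k) w = (\<lambda>x. of_int (content lam k) * w x)"
    and z: "z \<in> Ilam p n lam"
  shows "sign_act n z w = (\<lambda>x. 0)"
  using z
proof (induction rule: Ilam.induct)
  case zero
  then show ?case by (simp add: sign_act_def)
next
  case (gen i)
  then show ?case unfolding sign_act_diff sign_act_smult sign_act_one using eig[of i] by simp
next
  case (add x y)
  then show ?case unfolding sign_act_add by simp
next
  case (lmult a x)
  then show ?case by (simp add: sign_act_gmult sign_act_of_zero)
next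
  case (rmult a x)
  obtain q where "sign_act n a w = (\<lambda>x. q * w x)"
    using GZ_eigenvector[OF _ rmult.hyps(1), of w] eig by blast
  then show ?case using rmult.IH by (simp add: sign_act_gmult sign_act_scale)
qed

lemma congruent_scalar_unique:
  assumes eig: "\<And>k. 1 \<le> k \<Longrightarrow> k \<le> n \<Longrightarrow>
                   sign_act n (JM n k) w = (\<lambda>x. of_int (content lam k) * w x)"
    and nonzero: "w x0 \<noteq> 0"
    and r: "x - gsmult r (gone n) \<in> Ilam p n lam" and s: "x - gsmult s (gone n) \<in> Ilam p n lam"
  shows "r = s"
proof -
  have acts_by_scalar: "sign_act n x w x0 = c * w x0" if "x - gsmult c (gone n) \<in> Ilam p n lam" for c
    using fun_cong[OF Ilam_annihilates[OF eig that], of x0]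
    unfolding sign_act_diff sign_act_smult sign_act_one by simp
  show ?thesis using acts_by_scalar[OF r] acts_by_scalar[OF s] nonzero by simp
qed

section \<open>Rows of the row-reading tableau t^lam\<close>

text \<open>first_rows lam i is the number of boxes in the first i rows; row i (counted from 0)
  of t^lam holds the entries first_rows lam i + 1, ..., first_rows lam (i + 1).\<close>
abbreviation first_rows :: "nat list \<Rightarrow> nat \<Rightarrow> nat" where
  "first_rows lam i \<equiv> sum_list (take i lam)"

lemma first_rows_mono: "i \<le> j \<Longrightarrow> first_rows lam i \<le> first_rows lam j"
proof -
  assume "i \<le> j"
  then have "take j lam = take i lam @ take (j - i) (drop i lam)"
    by (metis le_add_diff_inverse take_add)
  then show ?thesis by simp
qed

lemma first_rows_Suc: "s < length lam \<Longrightarrow> first_rows lam (Suc s) = first_rows lam s + lam ! s"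
  by (simp add: take_Suc_conv_app_nth)

lemma row0_iff:
  assumes "1 \<le> m" "m \<le> sum_list lam"
  shows "row0 lam m = s \<longleftrightarrow> s < length lam \<and> first_rows lam s < m \<and> m \<le> first_rows lam (Suc s)"
proof
  assume r: "row0 lam m = s"
  have ex: "m \<le> first_rows lam (Suc (length lam))" using assms by simp
  have le: "m \<le> first_rows lam (Suc s)" using LeastI[of "\<lambda>i. m \<le> first_rows lam (Suc i)", OF ex] r
    unfolding row0_def by simp
  have lt: "first_rows lam s < m"
  proof (cases s)
    case 0 then show ?thesis using assms by simp
  next
    case (Suc s')
    have "\<not> m \<le> first_rows lam (Suc s')" using not_less_Least[of s' "\<lambda>i. m \<le> first_rows lam (Suc i)"] r Suc
      unfolding row0_def by simp
    then show ?thesis using Suc by simp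
  qed
  have "s < length lam"
  proof (rule ccontr)
    assume "\<not> s < length lam"
    then have "first_rows lam s = sum_list lam" by simp
    then show False using lt assms by simp
  qed
  then show "s < length lam \<and> first_rows lam s < m \<and> m \<le> first_rows lam (Suc s)" using le lt by simp
next
  assume h: "s < length lam \<and> first_rows lam s < m \<and> m \<le> first_rows lam (Suc s)"
  show "row0 lam m = s" unfolding row0_def
  proof (rule Least_equality)
    show "m \<le> first_rows lam (Suc s)" using h by simp
  next
    fix y assume y: "m \<le> first_rows lam (Suc y)"
    show "s \<le> y"
    proof (rule ccontr)
      assume "\<not> s \<le> y"
      then have "first_rows lam (Suc y) \<le> first_rows lam s" by (intro first_rows_mono) simp
      then show False using y h by simp
    qed
  qed
qed

lemma row0_props:
  assumes "1 \<le> m" "m \<le> sum_list lam"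
  shows "row0 lam m < length lam" "first_rows lam (row0 lam m) < m" "m \<le> first_rows lam (Suc (row0 lam m))"
  using row0_iff[OF assms, of "row0 lam m"] by auto

lemma row0_mono:
  assumes "1 \<le> a" "a \<le> b" "b \<le> sum_list lam"
  shows "row0 lam a \<le> row0 lam b"
proof (rule ccontr)
  assume "\<not> ?thesis"
  then have "Suc (row0 lam b) \<le> row0 lam a" by simp
  then have "first_rows lam (Suc (row0 lam b)) \<le> first_rows lam (row0 lam a)" by (rule first_rows_mono)
  moreover have "b \<le> first_rows lam (Suc (row0 lam b))" using row0_props(3)[of b lam] assms by simp
  moreover have "first_rows lam (row0 lam a) < a" using row0_props(2)[of a lam] assms by simp
  ultimately show False using assms by simp
qed

definition row_set :: "nat list \<Rightarrow> nat \<Rightarrow> nat set" where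
  "row_set lam s = {m. 1 \<le> m \<and> m \<le> sum_list lam \<and> row0 lam m = s}"

lemma finite_row_set: "finite (row_set lam s)"
  by (rule finite_subset[of _ "{1..sum_list lam}"]) (auto simp: row_set_def)

lemma row_set_eq: "s < length lam \<Longrightarrow> row_set lam s = {first_rows lam s + 1 .. first_rows lam (Suc s)}"
proof -
  assume s: "s < length lam"
  have "first_rows lam (Suc s) \<le> sum_list lam" using first_rows_mono[of "Suc s" "length lam" lam] s by simp
  show ?thesis
  proof (intro set_eqI iffI)
    fix m assume "m \<in> row_set lam s"
    then show "m \<in> {first_rows lam s + 1 .. first_rows lam (Suc s)}"
      unfolding row_set_def using row0_iff[of m lam s] by auto
  next
    fix m assume m: "m \<in> {first_rows lam s + 1 .. first_rows lam (Suc s)}"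
    then have "1 \<le> m" "m \<le> sum_list lam" using \<open>first_rows lam (Suc s) \<le> sum_list lam\<close> by auto
    then show "m \<in> row_set lam s" unfolding row_set_def using row0_iff[of m lam s] s m by auto
  qed
qed

lemma card_row_set: "s < length lam \<Longrightarrow> card (row_set lam s) = lam ! s"
  by (simp add: row_set_eq first_rows_Suc)

section \<open>Polynomial functions of one variable\<close>

definition poly_fun :: "nat \<Rightarrow> (rat \<Rightarrow> rat) \<Rightarrow> bool" where
  "poly_fun d f \<longleftrightarrow> (\<exists>p. degree p \<le> d \<and> (\<forall>z. f z = poly p z))"

lemma poly_fun_const: "poly_fun d (\<lambda>z. c)"
  unfolding poly_fun_def by (rule exI[of _ "[:c:]"]) simp

lemma poly_fun_id: "poly_fun (Suc 0) (\<lambda>z. z)"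
  unfolding poly_fun_def by (rule exI[of _ "[:0,1:]"]) simp

lemma poly_fun_mono: "poly_fun d f \<Longrightarrow> d \<le> e \<Longrightarrow> poly_fun e f"
  unfolding poly_fun_def by (meson order_trans)

lemma poly_fun_add: "poly_fun d f \<Longrightarrow> poly_fun d g \<Longrightarrow> poly_fun d (\<lambda>z. f z + g z)"
  unfolding poly_fun_def
  by (metis (no_types, lifting) degree_add_le poly_add)

lemma poly_fun_diff: "poly_fun d f \<Longrightarrow> poly_fun d g \<Longrightarrow> poly_fun d (\<lambda>z. f z - g z)"
  unfolding poly_fun_def
  by (metis (no_types, lifting) degree_diff_le poly_diff)

lemma poly_fun_mult: "poly_fun d f \<Longrightarrow> poly_fun e g \<Longrightarrow> poly_fun (d + e) (\<lambda>z. f z * g z)"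
  unfolding poly_fun_def
  by (metis (no_types, lifting) add_mono degree_mult_le order_trans poly_mult)

lemma poly_fun_sum: "finite A \<Longrightarrow> (\<And>a. a \<in> A \<Longrightarrow> poly_fun d (f a)) \<Longrightarrow> poly_fun d (\<lambda>z. \<Sum>a\<in>A. f a z)"
proof (induction A rule: finite_induct)
  case empty then show ?case using poly_fun_const[of d 0] by simp
next
  case (insert a A) then show ?case using poly_fun_add[of d "f a" "\<lambda>z. \<Sum>a\<in>A. f a z"] by simp
qed

lemma poly_fun_prod: "finite A \<Longrightarrow> (\<And>a. a \<in> A \<Longrightarrow> poly_fun (d a) (f a)) \<Longrightarrow> poly_fun (\<Sum>a\<in>A. d a) (\<lambda>z. \<Prod>a\<in>A. f a z)"
proof (induction A rule: finite_induct)
  case empty then show ?case using poly_fun_const[of 0 1] by simp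
next
  case (insert a A) then show ?case using poly_fun_mult[of "d a" "f a" "\<Sum>a\<in>A. d a" "\<lambda>z. \<Prod>a\<in>A. f a z"] by simp
qed

lemma poly_fun_eq:
  assumes "poly_fun d f" "poly_fun d g" "finite A" "card A > d" "\<And>z. z \<in> A \<Longrightarrow> f z = g z"
  shows "f = g"
proof -
  obtain p q where p: "degree p \<le> d" "\<And>z. f z = poly p z" and q: "degree q \<le> d" "\<And>z. g z = poly q z"
    using assms(1,2) unfolding poly_fun_def by blast
  have "p = q"
    by (rule poly_eqI_degree[of A]) (use assms p q in auto)
  then show ?thesis using p q by auto
qed

definition pair_prod :: "(nat \<times> nat) set \<Rightarrow> (nat \<Rightarrow> rat) \<Rightarrow> rat" where
  "pair_prod J x = (\<Prod>(a,b)\<in>J. x a - x b)"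

lemma pair_prod_cong: "(\<And>a b. (a,b) \<in> J \<Longrightarrow> y a = z a \<and> y b = z b) \<Longrightarrow> pair_prod J y = pair_prod J z"
  unfolding pair_prod_def by (intro prod.cong) auto

lemma pair_prod_union:
  "finite A \<Longrightarrow> finite B \<Longrightarrow> A \<inter> B = {} \<Longrightarrow> pair_prod (A \<union> B) y = pair_prod A y * pair_prod B y"
  unfolding pair_prod_def by (rule prod.union_disjoint)

lemma pair_prod_poly_fun:
  assumes "finite J"
  shows "poly_fun (card {j\<in>J. fst j = m \<or> snd j = m}) (\<lambda>z. pair_prod J (x(m := z)))"
proof -
  have "poly_fun (\<Sum>j\<in>J. if fst j = m \<or> snd j = m then 1 else 0)
                  (\<lambda>z. \<Prod>j\<in>J. (x(m:=z)) (fst j) - (x(m:=z)) (snd j))"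
  proof (rule poly_fun_prod[OF assms])
    fix j assume "j \<in> J"
    obtain a b where j: "j = (a,b)" by (cases j)
    show "poly_fun (if fst j = m \<or> snd j = m then 1 else 0) (\<lambda>z. (x(m:=z)) (fst j) - (x(m:=z)) (snd j))"
    proof (cases "a = m")
      case True
      then show ?thesis using j
        by (cases "b = m")
           (auto intro!: poly_fun_diff poly_fun_id poly_fun_const poly_fun_mono[OF poly_fun_const])
    next
      case False
      then show ?thesis using j
        by (cases "b = m") (auto intro!: poly_fun_diff poly_fun_id poly_fun_const)
    qed
  qed
  moreover have "(\<Sum>j\<in>J. if fst j = m \<or> snd j = m then 1 else 0) = card {j\<in>J. fst j = m \<or> snd j = m}"
    using assms by (simp add: sum.If_cases Int_def case_prod_beta conj_commute)
  ultimately show ?thesis unfolding pair_prod_def by (simp add: case_prod_beta)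
qed

section \<open>The row Vandermonde product\<close>

text \<open>The product
  row_vandermonde lam x of x_a - x_b over these pairs is the product of the Vandermonde
  determinants of the rows; it will be the common eigenvector of the L_k.\<close>
definition row_pairs :: "nat list \<Rightarrow> (nat \<times> nat) set" where
  "row_pairs lam = {(a,b). 1 \<le> a \<and> a < b \<and> b \<le> sum_list lam \<and> row0 lam a = row0 lam b}"

lemma finite_row_pairs: "finite (row_pairs lam)"
proof -
  have "row_pairs lam \<subseteq> {1..sum_list lam} \<times> {1..sum_list lam}" unfolding row_pairs_def by auto
  then show ?thesis by (rule finite_subset) simp
qed

definition row_vandermonde :: "nat list \<Rightarrow> (nat \<Rightarrow> rat) \<Rightarrow> rat" where
  "row_vandermonde lam x = pair_prod (row_pairs lam) x"

text \<open>Antisymmetry under a transposition of two adjacent entries of the same row: the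
  transposition permutes the remaining pairs of row_pairs lam and flips the pair (a, a+1).\<close>
lemma vandermonde_adjacent_swap:
  assumes a: "1 \<le> a" "Suc a \<le> sum_list lam" "row0 lam a = row0 lam (Suc a)"
  shows "row_vandermonde lam (x \<circ> transpose a (Suc a)) = - row_vandermonde lam x"
proof -
  define \<tau> where "\<tau> = transpose a (Suc a)"
  define P' where "P' = row_pairs lam - {(a, Suc a)}"
  have ins: "row_pairs lam = insert (a, Suc a) P'" using a unfolding P'_def row_pairs_def by auto
  have fin: "finite P'" using finite_row_pairs unfolding P'_def by auto
  define h where "h = (\<lambda>(p::nat,q::nat). (\<tau> p, \<tau> q))"
  have row\<tau>: "row0 lam (\<tau> p) = row0 lam p" for p
    using a unfolding \<tau>_def by (auto simp: transpose_def)
  have hP: "h y \<in> P'" if "y \<in> P'" for y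
  proof -
    obtain p q where y: "y = (p,q)" by (cases y)
    have pq: "1 \<le> p" "p < q" "q \<le> sum_list lam" "row0 lam p = row0 lam q" "(p,q) \<noteq> (a, Suc a)"
      using that y unfolding P'_def row_pairs_def by auto
    have "\<tau> p < \<tau> q" using pq unfolding \<tau>_def transpose_def by auto
    moreover have "1 \<le> \<tau> p" "\<tau> q \<le> sum_list lam" using pq a unfolding \<tau>_def transpose_def by auto
    moreover have "(\<tau> p, \<tau> q) \<noteq> (a, Suc a)" using pq unfolding \<tau>_def transpose_def by auto
    ultimately show ?thesis using pq row\<tau>[of p] row\<tau>[of q] y unfolding h_def P'_def row_pairs_def by auto
  qed
  have hh: "h (h y) = y" for y unfolding h_def \<tau>_def by (cases y) auto
  have "(\<Prod>(p,q)\<in>P'. (x \<circ> \<tau>) p - (x \<circ> \<tau>) q) = (\<Prod>(p,q)\<in>P'. x p - x q)"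
    by (rule prod.reindex_bij_witness[where i=h and j=h]) (use hP hh in \<open>auto simp: h_def\<close>)
  moreover have "(a, Suc a) \<notin> P'" unfolding P'_def by simp
  ultimately show ?thesis
    unfolding row_vandermonde_def pair_prod_def ins \<tau>_def[symmetric] using fin
    by (simp add: \<tau>_def) (simp add: algebra_simps)
qed

text \<open>Antisymmetry under any transposition inside a row, by induction on the distance,
  conjugating with adjacent transpositions.\<close>
lemma transpose_conj:
  assumes "m < k"
  shows "transpose m (Suc k) = transpose k (Suc k) \<circ> transpose m k \<circ> transpose k (Suc k)"
  using assms by (intro ext) (auto simp: transpose_def)

lemma vandermonde_row_swap:
  assumes "1 \<le> m" "m < k" "k \<le> sum_list lam" "row0 lam m = row0 lam k"
  shows "row_vandermonde lam (x \<circ> transpose m k) = - row_vandermonde lam x"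
  using assms
proof (induction k arbitrary: x rule: less_induct)
  case (less k)
  obtain k' where k: "k = Suc k'" using less.prems by (cases k) auto
  show ?case
  proof (cases "m = k'")
    case True
    then show ?thesis using vandermonde_adjacent_swap[of m lam x] less.prems k by (simp add: comp_def)
  next
    case False
    then have mk: "m < k'" using less.prems k by simp
    have r1: "row0 lam m \<le> row0 lam k'" using row0_mono[of m k' lam] less.prems k mk by simp
    have r2: "row0 lam k' \<le> row0 lam k" using row0_mono[of k' k lam] less.prems k mk by simp
    have rk: "row0 lam k' = row0 lam (Suc k')" using r1 r2 less.prems k by simp
    have "x \<circ> transpose m k = ((x \<circ> transpose k' k) \<circ> transpose m k') \<circ> transpose k' (Suc k')"
      using transpose_conj[OF mk] k by (simp add: o_assoc)
    then have "row_vandermonde lam (x \<circ> transpose m k)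
             = - row_vandermonde lam ((x \<circ> transpose k' k) \<circ> transpose m k')"
      using vandermonde_adjacent_swap[of k' lam "(x \<circ> transpose k' k) \<circ> transpose m k'"] less.prems k rk mk
      by simp
    also have "\<dots> = row_vandermonde lam (x \<circ> transpose k' k)"
      using less.IH[of k' "x \<circ> transpose k' k"] less.prems k mk r1 r2 by (simp add: comp_def)
    also have "\<dots> = - row_vandermonde lam x"
      using vandermonde_adjacent_swap[of k' lam x] less.prems k rk mk by simp
    finally show ?thesis .
  qed
qed

section \<open>A Garnir-type relation between two rows\<close>

definition pairs_in_row :: "nat list \<Rightarrow> nat \<Rightarrow> (nat \<times> nat) set" where
  "pairs_in_row lam s = {j \<in> row_pairs lam. row0 lam (fst j) = s}"

lemma pairs_in_row_mem: "(a,b) \<in> pairs_in_row lam s \<Longrightarrow> a \<in> row_set lam s \<and> b \<in> row_set lam s \<and> a < b"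
  unfolding pairs_in_row_def row_pairs_def row_set_def by auto

text \<open>An entry m of row s lies in at most lam_s - 1 pairs of that row: the other member of
  the pair determines it.\<close>
lemma card_pairs_through:
  assumes "s < length lam" "m \<in> row_set lam s"
  shows "card {j\<in>pairs_in_row lam s. fst j = m \<or> snd j = m} \<le> lam ! s - 1"
proof -
  let ?J = "{j\<in>pairs_in_row lam s. fst j = m \<or> snd j = m}"
  define partner where "partner = (\<lambda>j::nat\<times>nat. if fst j = m then snd j else fst j)"
  have "card ?J \<le> card (row_set lam s - {m})"
  proof (rule card_inj_on_le[of partner])
    show "inj_on partner ?J"
    proof (rule inj_onI)
      fix j j' assume j: "j \<in> ?J" and j': "j' \<in> ?J" and eq: "partner j = partner j'"
      obtain a b where ab: "j = (a,b)" by (cases j)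
      obtain a' b' where ab': "j' = (a',b')" by (cases j')
      have "a < b" "a' < b'" using j j' ab ab' pairs_in_row_mem by blast+
      then show "j = j'" using j j' ab ab' eq unfolding partner_def by (auto split: if_splits)
    qed
    show "partner ` ?J \<subseteq> row_set lam s - {m}"
      unfolding partner_def using pairs_in_row_mem by fastforce
    show "finite (row_set lam s - {m})" using finite_row_set by simp
  qed
  also have "\<dots> = lam ! s - 1" using card_row_set[OF assms(1)] assms(2) finite_row_set by simp
  finally show ?thesis .
qed

lemma finite_pairs_in_row: "finite (pairs_in_row lam s)"
  unfolding pairs_in_row_def using finite_row_pairs by simp

lemma pair_prod_collapse:
  assumes "m \<in> row_set lam s" "q \<in> row_set lam s" "m \<noteq> q"
  shows "pair_prod (pairs_in_row lam s) (x(m := x q)) = 0"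
proof -
  have "(min m q, max m q) \<in> pairs_in_row lam s"
    using assms unfolding pairs_in_row_def row_pairs_def row_set_def
    by (auto simp: min_def max_def)
  moreover have "(x(m := x q)) (min m q) - (x(m := x q)) (max m q) = 0"
    using assms(3) by (auto simp: min_def max_def)
  ultimately show ?thesis unfolding pair_prod_def using finite_pairs_in_row
    by (intro prod_zero) (auto intro!: bexI[of _ "(min m q, max m q)"])
qed

lemma row_factor_poly_fun:
  assumes "s < length lam" "m \<in> row_set lam s"
  shows "poly_fun (lam ! s - 1) (\<lambda>z. pair_prod (pairs_in_row lam s) (x(m := z)))"
  by (rule poly_fun_mono[OF pair_prod_poly_fun[OF finite_pairs_in_row] card_pairs_through[OF assms]])

text \<open>Substituting x_q for x_m in the factor of row s, where q is in row s, kills the factor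
  unless m = q; so a weighted sum of these substitutions picks out the weight of q.\<close>
lemma row_factor_substitution_sum:
  assumes q: "q \<in> row_set lam s"
  shows "(\<Sum>m\<in>row_set lam s. pair_prod (pairs_in_row lam s) (x(m := x q)) * c m)
       = pair_prod (pairs_in_row lam s) x * c q"
proof -
  have "pair_prod (pairs_in_row lam s) (x(m := x q)) * c m
      = (if m = q then pair_prod (pairs_in_row lam s) x * c q else 0)"
    if "m \<in> row_set lam s" for m
    using pair_prod_collapse[OF that q] by auto
  then show ?thesis using q finite_row_set by simp
qed

text \<open>Both sides, with x_k in the row r' factor replaced by a variable z, are
  polynomials in z of degree < lam_r'; they agree at the lam_r' distinct values x_q (q in
  row r'), where all summands but the one for m = q vanish.\<close>
lemma two_row_exchange:
  assumes sorted: "sorted_wrt (\<ge>) lam" and nz: "0 \<notin> set lam"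
    and r: "r' < r" "r < length lam" and k: "k \<in> row_set lam r"
    and inj: "inj_on x (row_set lam r')"
  shows "(\<Sum>m\<in>row_set lam r'. pair_prod (pairs_in_row lam r') (x(m := x k))
                              * pair_prod (pairs_in_row lam r) (x(k := x m)))
         = pair_prod (pairs_in_row lam r') x * pair_prod (pairs_in_row lam r) x"
proof -
  define A where "A = row_set lam r'"
  define l where "l = lam ! r'"
  have r'l: "r' < length lam" using r by simp
  have lpos: "l > 0" using nz r'l unfolding l_def by (metis gr0I nth_mem)
  have ll: "lam ! r \<le> l" using sorted r unfolding l_def by (simp add: sorted_wrt_iff_nth_less)
  have finA: "finite A" unfolding A_def by (rule finite_row_set)
  have cardA: "card A = l" unfolding A_def l_def using card_row_set[OF r'l] .
  define F where "F = (\<lambda>z. \<Sum>m\<in>A. pair_prod (pairs_in_row lam r') (x(m := z))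
                                   * pair_prod (pairs_in_row lam r) (x(k := x m)))"
  define G where "G = (\<lambda>z. pair_prod (pairs_in_row lam r') x * pair_prod (pairs_in_row lam r) (x(k := z)))"
  have "poly_fun (l - 1) F" unfolding F_def
  proof (rule poly_fun_sum[OF finA])
    fix m assume "m \<in> A"
    then have "poly_fun (l - 1 + 0) (\<lambda>z. pair_prod (pairs_in_row lam r') (x(m := z))
                                        * pair_prod (pairs_in_row lam r) (x(k := x m)))"
      unfolding A_def l_def by (intro poly_fun_mult row_factor_poly_fun[OF r'l] poly_fun_const)
    then show "poly_fun (l - 1) (\<lambda>z. pair_prod (pairs_in_row lam r') (x(m := z))
                                      * pair_prod (pairs_in_row lam r) (x(k := x m)))"
      by simp
  qed
  moreover have "poly_fun (l - 1) G"
  proof -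
    have "poly_fun (0 + (lam ! r - 1)) G"
      unfolding G_def by (intro poly_fun_mult poly_fun_const row_factor_poly_fun[OF r(2) k])
    then show ?thesis using ll by (auto elim: poly_fun_mono)
  qed
  moreover have "F (x q) = G (x q)" if "q \<in> A" for q
    using row_factor_substitution_sum[OF that[unfolded A_def], of x
            "\<lambda>m. pair_prod (pairs_in_row lam r) (x(k := x m))"]
    unfolding F_def G_def A_def by simp
  moreover have "card (x ` A) > l - 1"
    using card_image[OF inj[folded A_def]] cardA lpos by simp
  ultimately have "F = G" using finA by (intro poly_fun_eq) auto
  then have "F (x k) = G (x k)" by simp
  then show ?thesis unfolding F_def G_def A_def by simp
qed

definition pairs_off_rows :: "nat list \<Rightarrow> nat \<Rightarrow> nat \<Rightarrow> (nat \<times> nat) set" where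
  "pairs_off_rows lam r' r = {j \<in> row_pairs lam. row0 lam (fst j) \<noteq> r' \<and> row0 lam (fst j) \<noteq> r}"

lemma row_vandermonde_split:
  assumes "r' \<noteq> r"
  shows "row_vandermonde lam y = pair_prod (pairs_in_row lam r') y
           * (pair_prod (pairs_in_row lam r) y * pair_prod (pairs_off_rows lam r' r) y)"
proof -
  let ?Q = "pairs_off_rows lam r' r"
  have split: "row_pairs lam = pairs_in_row lam r' \<union> (pairs_in_row lam r \<union> ?Q)"
    unfolding pairs_off_rows_def pairs_in_row_def by auto
  have inner: "pair_prod (pairs_in_row lam r \<union> ?Q) y = pair_prod (pairs_in_row lam r) y * pair_prod ?Q y"
    by (rule pair_prod_union) (auto simp: finite_row_pairs pairs_in_row_def pairs_off_rows_def)
  have outer: "pair_prod (pairs_in_row lam r' \<union> (pairs_in_row lam r \<union> ?Q)) y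
             = pair_prod (pairs_in_row lam r') y * pair_prod (pairs_in_row lam r \<union> ?Q) y"
    by (rule pair_prod_union) (use assms in \<open>auto simp: finite_row_pairs pairs_in_row_def pairs_off_rows_def\<close>)
  show ?thesis unfolding row_vandermonde_def split outer inner ..
qed

lemma row_vandermonde_transpose_rows:
  assumes m: "m \<in> row_set lam r'" and k: "k \<in> row_set lam r" and r: "r' \<noteq> r"
  shows "row_vandermonde lam (x \<circ> transpose m k)
       = pair_prod (pairs_in_row lam r') (x(m := x k))
         * (pair_prod (pairs_in_row lam r) (x(k := x m)) * pair_prod (pairs_off_rows lam r' r) x)"
proof -
  have mR: "row0 lam m = r'" and kR: "row0 lam k = r" using m k unfolding row_set_def by auto
  have "pair_prod (pairs_in_row lam r') (x \<circ> transpose m k) = pair_prod (pairs_in_row lam r') (x(m := x k))"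
    by (rule pair_prod_cong) (use pairs_in_row_mem kR r in \<open>fastforce simp: row_set_def transpose_def\<close>)
  moreover have "pair_prod (pairs_in_row lam r) (x \<circ> transpose m k)
                 = pair_prod (pairs_in_row lam r) (x(k := x m))"
    by (rule pair_prod_cong) (use pairs_in_row_mem mR r in \<open>fastforce simp: row_set_def transpose_def\<close>)
  moreover have "pair_prod (pairs_off_rows lam r' r) (x \<circ> transpose m k)
                 = pair_prod (pairs_off_rows lam r' r) x"
  proof (rule pair_prod_cong)
    fix a b assume "(a,b) \<in> pairs_off_rows lam r' r"
    then have "row0 lam a \<noteq> r'" "row0 lam a \<noteq> r" "row0 lam b = row0 lam a"
      unfolding pairs_off_rows_def row_pairs_def by auto
    then have "a \<noteq> m" "a \<noteq> k" "b \<noteq> m" "b \<noteq> k" using mR kR by auto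
    then show "(x \<circ> transpose m k) a = x a \<and> (x \<circ> transpose m k) b = x b" by simp
  qed
  ultimately show ?thesis using row_vandermonde_split[OF r, of lam "x \<circ> transpose m k"] by simp
qed

lemma garnir_relation:
  assumes sorted: "sorted_wrt (\<ge>) lam" and nz: "0 \<notin> set lam"
    and r: "r' < r" "r < length lam" and k: "k \<in> row_set lam r"
    and inj: "inj_on x {1..sum_list lam}"
  shows "(\<Sum>m\<in>row_set lam r'. row_vandermonde lam (x \<circ> transpose m k)) = row_vandermonde lam x"
proof -
  let ?Q = "pairs_off_rows lam r' r"
  have inj': "inj_on x (row_set lam r')" using inj by (rule inj_on_subset) (auto simp: row_set_def)
  have "(\<Sum>m\<in>row_set lam r'. row_vandermonde lam (x \<circ> transpose m k))
      = (\<Sum>m\<in>row_set lam r'. pair_prod (pairs_in_row lam r') (x(m := x k))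
                             * pair_prod (pairs_in_row lam r) (x(k := x m))) * pair_prod ?Q x"
    unfolding sum_distrib_right
    using row_vandermonde_transpose_rows[OF _ k, of _ r' x] r by (intro sum.cong) simp_all
  also have "\<dots> = pair_prod (pairs_in_row lam r') x * pair_prod (pairs_in_row lam r) x * pair_prod ?Q x"
    using two_row_exchange[OF sorted nz r k inj'] by simp
  also have "\<dots> = row_vandermonde lam x" using row_vandermonde_split[of r' r] r by simp
  finally show ?thesis .
qed

section \<open>The row Vandermonde product is an eigenvector of the Jucys-Murphy elements\<close>

lemma same_row_transpositions:
  assumes k: "1 \<le> k" "k \<le> sum_list lam"
  shows "(\<Sum>j\<in>{first_rows lam (row0 lam k) + 1..<k}. row_vandermonde lam (x \<circ> transpose j k))
       = - (of_nat (k - first_rows lam (row0 lam k) - 1) * row_vandermonde lam x)"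
proof -
  let ?r = "row0 lam k"
  have "row_vandermonde lam (x \<circ> transpose j k) = - row_vandermonde lam x"
    if j: "j \<in> {first_rows lam ?r + 1..<k}" for j
  proof -
    have "row0 lam j = ?r" using row0_iff[of j lam ?r] row0_props[OF k] j k by auto
    then show ?thesis using vandermonde_row_swap[of j k lam x] j k by auto
  qed
  then show ?thesis by simp
qed

lemma entries_above_row:
  assumes "r < length lam"
  shows "{1..first_rows lam r} = (\<Union>r'\<in>{..<r}. row_set lam r')"
proof (intro set_eqI iffI)
  fix m assume m: "m \<in> {1..first_rows lam r}"
  moreover have "first_rows lam r \<le> sum_list lam"
    using first_rows_mono[of r "length lam" lam] assms by simp
  ultimately have m1: "1 \<le> m" "m \<le> sum_list lam" by auto
  have "first_rows lam (row0 lam m) < m" using row0_props(2)[OF m1] .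
  then have "row0 lam m < r" using m first_rows_mono[of r "row0 lam m" lam] by (cases "row0 lam m < r") auto
  then show "m \<in> (\<Union>r'\<in>{..<r}. row_set lam r')" using m1 unfolding row_set_def by auto
next
  fix m assume "m \<in> (\<Union>r'\<in>{..<r}. row_set lam r')"
  then obtain r' where r': "r' < r" "m \<in> row_set lam r'" by auto
  then have "m \<le> first_rows lam (Suc r')" using assms row_set_eq by auto
  moreover have "first_rows lam (Suc r') \<le> first_rows lam r" using r' by (intro first_rows_mono) simp
  ultimately show "m \<in> {1..first_rows lam r}" using r' unfolding row_set_def by auto
qed

text \<open>Transpositions of k with the entries of the rows above give +1 per row, by the Garnir
  relation.\<close>
lemma upper_rows_transpositions:
  assumes sorted: "sorted_wrt (\<ge>) lam" and nz: "0 \<notin> set lam"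
    and k: "1 \<le> k" "k \<le> sum_list lam" and inj: "inj_on x {1..sum_list lam}"
  shows "(\<Sum>j\<in>{1..first_rows lam (row0 lam k)}. row_vandermonde lam (x \<circ> transpose j k))
       = of_nat (row0 lam k) * row_vandermonde lam x"
proof -
  let ?r = "row0 lam k"
  have r: "?r < length lam" using row0_props(1)[OF k] .
  have "(\<Sum>j\<in>{1..first_rows lam ?r}. row_vandermonde lam (x \<circ> transpose j k))
      = (\<Sum>r'\<in>{..<?r}. \<Sum>j\<in>row_set lam r'. row_vandermonde lam (x \<circ> transpose j k))"
    unfolding entries_above_row[OF r]
  proof (rule sum.UNION_disjoint)
    show "\<forall>r'\<in>{..<?r}. finite (row_set lam r')" using finite_row_set by blast
    show "\<forall>r'\<in>{..<?r}. \<forall>r''\<in>{..<?r}. r' \<noteq> r'' \<longrightarrow> row_set lam r' \<inter> row_set lam r'' = {}"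
      unfolding row_set_def by auto
  qed simp
  also have "\<dots> = (\<Sum>r'\<in>{..<?r}. row_vandermonde lam x)"
    using garnir_relation[OF sorted nz _ r _ inj, of _ k] k by (intro sum.cong) (auto simp: row_set_def)
  finally show ?thesis by simp
qed

lemma JM_transpositions_sum:
  assumes sorted: "sorted_wrt (\<ge>) lam" and nz: "0 \<notin> set lam"
    and k: "1 \<le> k" "k \<le> sum_list lam" and inj: "inj_on x {1..sum_list lam}"
  shows "(\<Sum>j\<in>{1..<k}. row_vandermonde lam (x \<circ> transpose j k))
       = - (of_int (content lam k) * row_vandermonde lam x)"
proof -
  let ?r = "row0 lam k" and ?V = "\<lambda>j. row_vandermonde lam (x \<circ> transpose j k)"
  have before: "first_rows lam ?r < k" using row0_props(2)[OF k] .
  then have split: "{1..<k} = {first_rows lam ?r + 1..<k} \<union> {1..first_rows lam ?r}" by auto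
  have "(\<Sum>j\<in>{1..<k}. ?V j)
      = (\<Sum>j\<in>{first_rows lam ?r + 1..<k}. ?V j) + (\<Sum>j\<in>{1..first_rows lam ?r}. ?V j)"
    unfolding split by (rule sum.union_disjoint) auto
  also have "\<dots> = (of_nat ?r - of_nat (k - first_rows lam ?r - 1)) * row_vandermonde lam x"
    using same_row_transpositions[OF k] upper_rows_transpositions[OF sorted nz k inj]
    by (simp add: algebra_simps)
  also have "of_nat ?r - of_nat (k - first_rows lam ?r - 1) = - (of_int (content lam k) :: rat)"
    using before unfolding Defs.content_def by simp
  finally show ?thesis by (metis mult_minus_left)
qed

text \<open>The eigenvector: the row Vandermonde product, cut off to injective x (where the Garnir
  relation holds). Its support is stable under S_n.\<close>
definition specht :: "nat list \<Rightarrow> (nat \<Rightarrow> rat) \<Rightarrow> rat" where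
  "specht lam x = (if inj_on x {1..sum_list lam} then row_vandermonde lam x else 0)"

lemma inj_on_comp_permutes:
  assumes "\<sigma> permutes A" shows "inj_on (x \<circ> \<sigma>) A \<longleftrightarrow> inj_on x A"
proof -
  have "inj_on \<sigma> A" using assms by (meson permutes_inj inj_on_subset subset_UNIV)
  then have "inj_on x (\<sigma> ` A) \<longleftrightarrow> inj_on (x \<circ> \<sigma>) A" by (rule comp_inj_on_iff)
  then show ?thesis using permutes_image[OF assms] by simp
qed

lemma specht_eigen:
  assumes sorted: "sorted_wrt (\<ge>) lam" and nz: "0 \<notin> set lam"
    and k: "1 \<le> k" "k \<le> sum_list lam"
  shows "sign_act (sum_list lam) (JM (sum_list lam) k) (specht lam)
       = (\<lambda>x. of_int (content lam k) * specht lam x)"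
proof
  fix x
  define N where "N = sum_list lam"
  have tp: "transpose j k permutes {1..N}" if "j \<in> {1..<k}" for j
    using that k unfolding N_def by (intro permutes_swap_id) auto
  have "specht lam (x \<circ> transpose j k)
      = (if inj_on x {1..N} then row_vandermonde lam (x \<circ> transpose j k) else 0)"
    if "j \<in> {1..<k}" for j
    using inj_on_comp_permutes[OF tp[OF that], of x] unfolding specht_def N_def by simp
  then have "(\<Sum>j\<in>{1..<k}. specht lam (x \<circ> transpose j k))
      = (\<Sum>j\<in>{1..<k}. if inj_on x {1..N} then row_vandermonde lam (x \<circ> transpose j k) else 0)"
    by (rule sum.cong[OF refl])
  also have "\<dots> = (if inj_on x {1..N} then \<Sum>j\<in>{1..<k}. row_vandermonde lam (x \<circ> transpose j k) else 0)"
    by simp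
  also have "\<dots> = - (of_int (content lam k) * specht lam x)"
    using JM_transpositions_sum[OF sorted nz k] unfolding specht_def N_def by simp
  finally show "sign_act (sum_list lam) (JM (sum_list lam) k) (specht lam) x
      = of_int (content lam k) * specht lam x"
    using sign_act_JM[of k N] k unfolding N_def by simp
qed

text \<open>At x = (1, 2, ..., n) all factors x_a - x_b with a < b are nonzero.\<close>
lemma specht_nonzero: "specht lam (\<lambda>a. of_nat a) \<noteq> 0"
proof -
  have "inj_on (\<lambda>a. of_nat a :: rat) {1..sum_list lam}" by (auto simp: inj_on_def)
  moreover have "row_vandermonde lam (\<lambda>a. of_nat a) \<noteq> 0"
    unfolding row_vandermonde_def pair_prod_def using finite_row_pairs
    by (auto simp: prod_zero_iff row_pairs_def)
  ultimately show ?thesis unfolding specht_def by simp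
qed

theorem mainTheorem12:
  fixes p :: int and n :: nat and lam :: "nat list"
  assumes "prime p" and "is_partition n lam"
  shows "(\<forall>x\<in>GZ p n. \<exists>!r. r \<in> Zloc p \<and> x - gsmult r (gone n) \<in> Ilam p n lam)
       \<and> (\<forall>i\<in>{1..n}. \<forall>x\<in>GZ p n.
            gmult n (JM n i) x - gsmult (of_int (content lam i)) x \<in> Ilam p n lam)"
proof -
  have sorted: "sorted_wrt (\<ge>) lam" and nz: "0 \<notin> set lam" and size: "sum_list lam = n"
    using assms(2) unfolding is_partition_def by auto
  have eigen: "\<And>k. 1 \<le> k \<Longrightarrow> k \<le> n \<Longrightarrow>
      sign_act n (JM n k) (specht lam) = (\<lambda>x. of_int (content lam k) * specht lam x)"
    using specht_eigen[OF sorted nz] size by blast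
  have unique: "r = s" if "x - gsmult r (gone n) \<in> Ilam p n lam" "x - gsmult s (gone n) \<in> Ilam p n lam"
    for x r s using congruent_scalar_unique[OF eigen specht_nonzero that] .
  show ?thesis
    using GZ_congruent_scalar[OF assms(1)] unique JM_acts_by_content by auto
qed

end
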